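(* For any graph $G=(V,E)$, the evolution algebras $\mathcal{A}(G)$ and $\mathcal{A}_{RW}(G)$ are strongly isotopic; that is, there exist non-singular $\mathbb{R}$-linear maps $f,h:\mathcal{A}(G)\to\mathcal{A}_{RW}(G)$ such that $f(u)\cdot f(v)=h(u\cdot v)$ for all $u,v\in\mathcal{A}(G)$.
   Context: Graphs are simple (no loops or multiple edges), connected, with a countable (finite or infinite) vertex set $V$, and locally finite: $\deg(i)<\infty$ for every vertex $i$, where $\deg(i)$ is the number of neighbors of $i$. The adjacency matrix is $A=(a_{ij})$ with $a_{ij}=1$ if $i,j$ are neighbors and $0$ otherwise. An evolution algebra over $\mathbb{R}$ is an algebra with a countable basis $\{e_i\}$ (natural basis) such that $e_i\cdot e_j=0$ for $i\neq j$ and $e_i\cdot e_i=\sum_k c_{ik}e_k$. $\mathcal{A}(G)$ is the evolution algebra with natural basis $\{e_i:i\in V\}$ and $e_i\cdot e_i=\sum_{k\in V}a_{ik}e_k$, $e_i\cdot e_j=0$ for $i\ne j$. $\mathcal{A}_{RW}(G)$ is the evolution algebra with natural basis $\{e_i:i\in V\}$ and $e_i\cdot e_i=\sum_{k\in V}\frac{a_{ik}}{\deg(i)}e_k$, $e_i\cdot e_j=0$ for $i\ne j$ (the algebra of the symmetric random walk on $G$). A triple $(f,g,h)$ of non-singular linear maps $\mathcal{A}\to\mathcal{B}$ with $f(u)\cdot g(v)=h(u\cdot v)$ for all $u,v$ is an isotopism; it is a strong isotopism if $f=g$. *)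

theory Defs
  imports Complex_Main "HOL-Library.Countable"
begin

definition graph :: "('v::countable \<Rightarrow> 'v \<Rightarrow> bool) \<Rightarrow> bool" where
  "graph E \<longleftrightarrow> (\<forall>i j. E i j \<longrightarrow> E j i) \<and> (\<forall>i. \<not> E i i)
     \<and> (\<forall>i. finite {j. E i j}) \<and> (\<forall>i j. E\<^sup>*\<^sup>* i j)"

definition deg :: "('v \<Rightarrow> 'v \<Rightarrow> bool) \<Rightarrow> 'v \<Rightarrow> nat" where
  "deg E i = card {j. E i j}"

text \<open>Elements of an evolution algebra with natural basis indexed by 'v:
  finitely supported coefficient functions.\<close>
definition fin_supp :: "('v \<Rightarrow> real) set" where
  "fin_supp = {x. finite {i. x i \<noteq> 0}}"

text \<open>Product of the evolution algebra with structure constants c: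
  e_i e_j = 0 (i \<noteq> j), e_i e_i = sum_k c i k e_k.\<close>
definition evo_mult :: "('v \<Rightarrow> 'v \<Rightarrow> real) \<Rightarrow> ('v \<Rightarrow> real) \<Rightarrow> ('v \<Rightarrow> real) \<Rightarrow> ('v \<Rightarrow> real)" where
  "evo_mult c x y = (\<lambda>k. \<Sum>i\<in>{i. x i \<noteq> 0 \<and> y i \<noteq> 0}. x i * y i * c i k)"

definition adj_coeff :: "('v \<Rightarrow> 'v \<Rightarrow> bool) \<Rightarrow> 'v \<Rightarrow> 'v \<Rightarrow> real" where
  "adj_coeff E i k = (if E i k then 1 else 0)"

definition rw_coeff :: "('v \<Rightarrow> 'v \<Rightarrow> bool) \<Rightarrow> 'v \<Rightarrow> 'v \<Rightarrow> real" where
  "rw_coeff E i k = (if E i k then 1 / real (deg E i) else 0)"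

definition nonsingular_linear :: "(('v \<Rightarrow> real) \<Rightarrow> ('v \<Rightarrow> real)) \<Rightarrow> bool" where
  "nonsingular_linear f \<longleftrightarrow>
     (\<forall>x\<in>fin_supp. \<forall>y\<in>fin_supp. f (\<lambda>i. x i + y i) = (\<lambda>i. f x i + f y i))
   \<and> (\<forall>a. \<forall>x\<in>fin_supp. f (\<lambda>i. a * x i) = (\<lambda>i. a * f x i))
   \<and> bij_betw f fin_supp fin_supp"

end

theory Submission
  imports Defs
begin

text \<open>Rescaling the natural basis by e_i \<mapsto> sqrt (w i) e_i turns an evolution algebra with
  structure constants c i k into one with structure constants c i k / w i. For the graph
  algebra take w i = deg i (or 1 at an isolated vertex, whose row is zero anyway): this
  divides row i of the adjacency matrix by the degree, giving the random walk algebra.\<close>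

lemma nonsingular_linear_scale:
  assumes s: "\<And>i. s i \<noteq> 0"
  shows "nonsingular_linear (\<lambda>x i. s i * x i)"
proof -
  have inv_s: "\<And>i. inverse (s i) \<noteq> 0" using s by simp
  have "bij_betw (\<lambda>x i. s i * x i) fin_supp fin_supp"
    by (rule bij_betw_byWitness[where f' = "\<lambda>x i. inverse (s i) * x i"])
      (auto simp: s inv_s fin_supp_def)
  then show ?thesis
    unfolding nonsingular_linear_def by (auto simp: algebra_simps)
qed

lemma nonsingular_linear_id: "nonsingular_linear (\<lambda>x. x)"
  using nonsingular_linear_scale[of "\<lambda>_. 1"] by simp

lemma evo_mult_scale:
  fixes w :: "'v \<Rightarrow> real"
  assumes w: "\<And>i. w i > 0"
  shows "evo_mult (\<lambda>i k. c i k / w i) (\<lambda>i. sqrt (w i) * u i) (\<lambda>i. sqrt (w i) * v i)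
       = evo_mult c u v"
proof -
  have supp: "{i. sqrt (w i) * u i \<noteq> 0 \<and> sqrt (w i) * v i \<noteq> 0} = {i. u i \<noteq> 0 \<and> v i \<noteq> 0}"
    using w by (simp add: less_le)
  have summand: "sqrt (w i) * u i * (sqrt (w i) * v i) * (c i k / w i) = u i * v i * c i k" for i k
    using w[of i] by (simp add: field_simps flip: real_sqrt_mult)
  show ?thesis
    unfolding evo_mult_def supp summand ..
qed

lemma rw_coeff_eq_adj_coeff_div:
  assumes "finite {j. E i j}"
  shows "rw_coeff E i k = adj_coeff E i k / real (max 1 (deg E i))"
proof (cases "E i k")
  case True
  with assms have "deg E i \<ge> 1"
    unfolding deg_def by (metis One_nat_def Suc_leI card_gt_0_iff empty_iff mem_Collect_eq)
  with True show ?thesis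
    by (simp add: rw_coeff_def adj_coeff_def max_absorb2)
qed (simp add: rw_coeff_def adj_coeff_def)

theorem theorem2p2:
  fixes E :: "'v::countable \<Rightarrow> 'v \<Rightarrow> bool"
  assumes "graph E"
  shows "\<exists>f h. nonsingular_linear f \<and> nonsingular_linear h \<and>
    (\<forall>u\<in>fin_supp. \<forall>v\<in>fin_supp.
       evo_mult (rw_coeff E) (f u) (f v) = h (evo_mult (adj_coeff E) u v))"
proof -
  define w where "w i = real (max 1 (deg E i))" for i
  have w_pos: "\<And>i. w i > 0" by (simp add: w_def)
  have "rw_coeff E = (\<lambda>i k. adj_coeff E i k / w i)"
    using assms by (intro ext) (simp add: graph_def w_def rw_coeff_eq_adj_coeff_div)
  then have "evo_mult (rw_coeff E) (\<lambda>i. sqrt (w i) * u i) (\<lambda>i. sqrt (w i) * v i)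
      = evo_mult (adj_coeff E) u v" for u v
    using evo_mult_scale[OF w_pos] by simp
  moreover have "nonsingular_linear (\<lambda>x i. sqrt (w i) * x i)"
    using w_pos by (intro nonsingular_linear_scale) (simp add: less_le)
  ultimately show ?thesis
    using nonsingular_linear_id by blast
qed

end
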